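(* Let $p\in[1,+\infty)$, $s\in(0,1)$ and $\beta\in\big(\max\{0,\frac1p-2s\},\frac1p\big)$, and let $u(x):=(1+x^2)^{-\beta/2}$ for $x\in\mathbb{R}$. Then $u\notin L^p(\mathbb{R})$; there exists a constant $C>0$ such that $|(-\Delta)^su(x)|\le C|x|^{-\beta-2s}$ for all $|x|\ge1$; and $(-\Delta)^su\in L^p(\mathbb{R})$.
   Context: For a function $v$ on $\mathbb{R}^n$ ($n=1$ here), smooth near $x$ and with $\int\frac{|v(y)|}{(1+|y|)^{n+2s}}dy<\infty$, the fractional Laplacian is $(-\Delta)^sv(x):=c_{n,s}\lim_{\varepsilon\searrow0}\int_{\mathbb{R}^n\setminus B_\varepsilon(x)}\frac{v(x)-v(y)}{|x-y|^{n+2s}}dy$, with $c_{n,s}=-\frac{2^{2s}\Gamma(\frac{n+2s}2)}{\pi^{n/2}\Gamma(-s)}>0$. *)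

theory Defs
  imports "HOL-Analysis.Analysis"
begin

definition frac_const :: "real \<Rightarrow> real" where
  "frac_const s = - (2 powr (2 * s) * Gamma ((1 + 2 * s)/2)) / (sqrt pi * Gamma (-s))"

definition frac_trunc :: "real \<Rightarrow> (real \<Rightarrow> real) \<Rightarrow> real \<Rightarrow> real \<Rightarrow> real" where
  "frac_trunc s v x \<epsilon> =
     (LINT y:{y. \<epsilon> \<le> \<bar>x - y\<bar>}|lborel. (v x - v y) / \<bar>x - y\<bar> powr (1 + 2 * s))"

definition frac_lap :: "real \<Rightarrow> (real \<Rightarrow> real) \<Rightarrow> real \<Rightarrow> real" where
  "frac_lap s v x = frac_const s * Lim (at_right 0) (frac_trunc s v x)"

definition in_Lp :: "real \<Rightarrow> (real \<Rightarrow> real) \<Rightarrow> bool" where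
  "in_Lp p f \<longleftrightarrow> f \<in> borel_measurable lborel \<and> integrable lborel (\<lambda>x. \<bar>f x\<bar> powr p)"

end

theory Submission
  imports Defs
begin

text \<open>The symmetrised integrand (2 u(x) - u(x+h) - u(x-h)) / |h|^(1+2s) is O(|h|^(1-2s)) near
  h = 0, because u'' is bounded, and O(|h|^(-1-2s)) at infinity, because u is bounded. Hence the
  principal value exists, equals half of an absolutely convergent integral, and is bounded in x.
  For x \<noteq> 0 substitute h = |x| t: for |t| \<le> 1/2 the second derivative of u between x - h and
  x + h is O(|x|^(-beta-2)), while for |t| \<ge> 1/2 one uses u(y) \<le> |y|^(-beta). This bounds the
  integrand by |x|^(-beta-1-2s) Phi(t) with Phi integrable, so the fractional Laplacian is
  O(|x|^(-beta-2s)), which is p-integrable at infinity because (beta + 2s) p > 1. On the other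
  hand |u|^p \<ge> c/x on [1, \<infinity>) because beta p < 1.\<close>

section \<open>Powers of |t| and integrability\<close>

lemma power2_powr:
  assumes "(y::real) \<noteq> 0"
  shows "(y\<^sup>2) powr a = \<bar>y\<bar> powr (2 * a)"
proof -
  have "y\<^sup>2 = \<bar>y\<bar> powr 2"
    using assms by (simp add: powr_realpow[of "\<bar>y\<bar>" 2, simplified])
  then have "(y\<^sup>2) powr a = (\<bar>y\<bar> powr 2) powr a"
    by (rule arg_cong)
  then show ?thesis
    by (simp only: powr_powr)
qed

lemma power2_div_abs_powr:
  assumes "(h::real) \<noteq> 0"
  shows "h\<^sup>2 / \<bar>h\<bar> powr a = \<bar>h\<bar> powr (2 - a)"
proof -
  have "h\<^sup>2 = \<bar>h\<bar> powr 2"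
    using assms by (simp add: powr_realpow[of "\<bar>h\<bar>" 2, simplified])
  then show ?thesis
    by (simp add: powr_diff)
qed

definition abs_powr_inside :: "real \<Rightarrow> real \<Rightarrow> real \<Rightarrow> real" where
  "abs_powr_inside a c t = indicator {-c..c} t * \<bar>t\<bar> powr a"

definition abs_powr_outside :: "real \<Rightarrow> real \<Rightarrow> real \<Rightarrow> real" where
  "abs_powr_outside a c t = indicator {t. c \<le> \<bar>t\<bar>} t * \<bar>t\<bar> powr a"

lemma abs_powr_inside_measurable [measurable]: "abs_powr_inside a c \<in> borel_measurable borel"
  unfolding abs_powr_inside_def[abs_def] by measurable

lemma abs_powr_outside_measurable [measurable]: "abs_powr_outside a c \<in> borel_measurable borel"
  unfolding abs_powr_outside_def[abs_def] by measurable

lemma abs_powr_inside_nonneg: "0 \<le> abs_powr_inside a c t"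
  by (simp add: abs_powr_inside_def indicator_def)

lemma abs_powr_outside_nonneg: "0 \<le> abs_powr_outside a c t"
  by (simp add: abs_powr_outside_def indicator_def)

lemma integrable_lborel_if_integrable_on_nonneg:
  fixes f :: "real \<Rightarrow> real"
  assumes "f integrable_on A" "\<And>x. x \<in> A \<Longrightarrow> 0 \<le> f x"
    and "A \<in> sets borel" "f \<in> borel_measurable borel"
  shows "integrable lborel (\<lambda>x. indicator A x * f x)"
proof -
  have "f absolutely_integrable_on A"
    using assms(1,2) by (rule nonnegative_absolutely_integrable_1)
  then have "integrable (completion lborel) (\<lambda>x. indicator A x * f x)"
    by (simp add: set_integrable_def)
  moreover have "(\<lambda>x. indicator A x * f x) \<in> borel_measurable lborel"
    using assms(3,4) by measurable
  ultimately show ?thesis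
    by (simp add: integrable_completion)
qed

lemma integrable_comp_abs:
  fixes g :: "real \<Rightarrow> real"
  assumes "integrable lborel g"
  shows "integrable lborel (\<lambda>t. g \<bar>t\<bar>)"
proof -
  have "integrable lborel (\<lambda>t. g (0 + (-1) * t))"
    using assms by (intro lborel_integrable_real_affine) auto
  with assms have "integrable lborel (\<lambda>t. \<bar>g t\<bar> + \<bar>g (0 + (-1) * t)\<bar>)"
    by auto
  moreover have "(\<lambda>t. g \<bar>t\<bar>) \<in> borel_measurable lborel"
    using borel_measurable_integrable[OF assms] by measurable
  ultimately show ?thesis
    by (rule Bochner_Integration.integrable_bound) (auto simp: abs_if)
qed

lemma integrable_abs_powr_inside:
  assumes "a > -1" "c \<ge> 0"
  shows "integrable lborel (abs_powr_inside a c)"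
proof -
  have "integrable lborel (\<lambda>x. indicator {0..c} x * x powr a)"
    using integrable_on_powr_from_0[OF assms]
    by (intro integrable_lborel_if_integrable_on_nonneg) auto
  then have "integrable lborel (\<lambda>t. indicator {0..c} \<bar>t\<bar> * \<bar>t\<bar> powr a)"
    by (rule integrable_comp_abs)
  then show ?thesis
    by (simp add: abs_powr_inside_def[abs_def] indicator_def abs_le_iff minus_le_iff conj_commute)
qed

lemma integrable_abs_powr_outside:
  assumes "a < -1" "c > 0"
  shows "integrable lborel (abs_powr_outside a c)"
proof -
  have "(\<lambda>x. x powr a) integrable_on {c..}"
    using has_integral_powr_to_inf[OF assms] unfolding integrable_on_def by blast
  then have "integrable lborel (\<lambda>x. indicator {c..} x * x powr a)"
    using \<open>c > 0\<close> by (intro integrable_lborel_if_integrable_on_nonneg) auto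
  then have "integrable lborel (\<lambda>t. indicator {c..} \<bar>t\<bar> * \<bar>t\<bar> powr a)"
    by (rule integrable_comp_abs)
  then show ?thesis
    by (simp add: abs_powr_outside_def[abs_def] indicator_def)
qed

lemma abs_integral_le_by_scaling:
  fixes g \<Phi> :: "real \<Rightarrow> real"
  assumes "0 < r" "integrable lborel g" "integrable lborel \<Phi>"
    and "AE t in lborel. \<bar>g (r * t)\<bar> \<le> c * \<Phi> t"
  shows "\<bar>\<integral>h. g h \<partial>lborel\<bar> \<le> r * c * (\<integral>t. \<Phi> t \<partial>lborel)"
proof -
  have g_scaled: "integrable lborel (\<lambda>t. g (0 + r * t))"
    using assms(1,2) by (intro lborel_integrable_real_affine) auto
  have "\<bar>\<integral>h. g h \<partial>lborel\<bar> = r * \<bar>\<integral>t. g (0 + r * t) \<partial>lborel\<bar>"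
    using lborel_integral_real_affine[of r g 0] assms(1) by (simp add: abs_mult)
  also have "\<bar>\<integral>t. g (0 + r * t) \<partial>lborel\<bar> \<le> (\<integral>t. \<bar>g (0 + r * t)\<bar> \<partial>lborel)"
    using integral_norm_bound[of lborel "\<lambda>t. g (0 + r * t)"] by simp
  also have "\<dots> \<le> (\<integral>t. c * \<Phi> t \<partial>lborel)"
    using g_scaled assms(3,4) by (intro integral_mono_AE) auto
  finally show ?thesis
    using assms(1) by (simp add: mult_left_mono mult.assoc)
qed

lemma not_integrable_if_ge_inverse:
  fixes f :: "real \<Rightarrow> real"
  assumes "0 < k" "\<And>x. 0 \<le> f x" "\<And>x. 1 \<le> x \<Longrightarrow> k / x \<le> f x"
  shows "\<not> integrable lborel f"
proof
  assume f: "integrable lborel f"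
  have "ln b \<le> (\<integral>x. f x \<partial>lborel) / k" if "1 \<le> b" for b
  proof -
    have "(\<integral>x. indicator {1..b} x *\<^sub>R (1 / x) \<partial>lborel) = ln b - ln 1"
    proof (rule integral_FTC_atLeastAtMost[OF that])
      show "(ln has_vector_derivative 1 / x) (at x within {1..b})" if "1 \<le> x" for x
        using that by (auto intro!: derivative_eq_intros
            simp flip: has_real_derivative_iff_has_vector_derivative)
      show "continuous_on {1..b} (\<lambda>x. 1 / x)"
        by (intro continuous_intros) auto
    qed
    then have "ln b = (\<integral>x. 1 / x * indicator {1..b} x \<partial>lborel)"
      by (simp add: mult.commute)
    also have "\<dots> \<le> (\<integral>x. f x / k \<partial>lborel)"
    proof (rule integral_mono)
      show "integrable lborel (\<lambda>x. 1 / x * indicator {1..b} x)"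
        by (rule borel_integrable_atLeastAtMost) auto
      show "integrable lborel (\<lambda>x. f x / k)"
        using f by simp
      show "1 / x * indicator {1..b} x \<le> f x / k" for x
        using assms(1) assms(2)[of x] assms(3)[of x]
        by (auto simp: indicator_def field_simps)
    qed
    finally show ?thesis
      by simp
  qed
  from this[of "exp (\<bar>(\<integral>x. f x \<partial>lborel) / k\<bar> + 1)"]
  have "\<bar>(\<integral>x. f x \<partial>lborel) / k\<bar> + 1 \<le> (\<integral>x. f x \<partial>lborel) / k"
    by simp
  then show False
    using abs_ge_self[of "(\<integral>x. f x \<partial>lborel) / k"] by linarith
qed

lemma in_Lp_if_bounded_decay:
  fixes f :: "real \<Rightarrow> real"
  assumes f [measurable]: "f \<in> borel_measurable borel"
    and bounded: "\<And>x. \<bar>f x\<bar> \<le> B"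
    and decay: "\<And>x. 1 \<le> \<bar>x\<bar> \<Longrightarrow> \<bar>f x\<bar> \<le> C * \<bar>x\<bar> powr (-\<gamma>)"
    and "0 < p" "1 < \<gamma> * p"
  shows "in_Lp p f"
  unfolding in_Lp_def
proof (intro conjI)
  show "f \<in> borel_measurable lborel"
    by simp
  have "0 \<le> C"
    using decay[of 1] abs_ge_zero[of "f 1"] by simp
  let ?g = "\<lambda>x. B powr p * indicator {-1..1} x + C powr p * abs_powr_outside (-(\<gamma> * p)) 1 x"
  show "integrable lborel (\<lambda>x. \<bar>f x\<bar> powr p)"
  proof (rule Bochner_Integration.integrable_bound)
    have "integrable lborel (\<lambda>x::real. indicator {-1..1} x :: real)"
      by (intro integrable_real_indicator) auto
    moreover have "integrable lborel (abs_powr_outside (-(\<gamma> * p)) 1)"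
      using assms(5) by (intro integrable_abs_powr_outside) auto
    ultimately show "integrable lborel ?g"
      by simp
    show "AE x in lborel. norm (\<bar>f x\<bar> powr p) \<le> norm (?g x)"
    proof (rule AE_I2)
      fix x :: real
      have "\<bar>f x\<bar> powr p \<le> ?g x"
      proof (cases "\<bar>x\<bar> \<le> 1")
        case True
        have "\<bar>f x\<bar> powr p \<le> B powr p"
          using bounded[of x] \<open>0 < p\<close> by (intro powr_mono2) auto
        moreover have "0 \<le> C powr p * abs_powr_outside (-(\<gamma> * p)) 1 x"
          by (simp add: abs_powr_outside_nonneg)
        ultimately show ?thesis
          using True by (simp add: indicator_def abs_le_iff)
      next
        case False
        have "\<bar>f x\<bar> powr p \<le> (C * \<bar>x\<bar> powr (-\<gamma>)) powr p"
          using decay[of x] False \<open>0 < p\<close> by (intro powr_mono2) auto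
        also have "\<dots> = C powr p * abs_powr_outside (-(\<gamma> * p)) 1 x"
          using False \<open>0 \<le> C\<close> by (simp add: abs_powr_outside_def powr_mult powr_powr)
        finally show ?thesis
          by (simp add: add_increasing)
      qed
      then show "norm (\<bar>f x\<bar> powr p) \<le> norm (?g x)"
        by simp
    qed
  qed simp
qed

section \<open>The symmetrised principal value\<close>

definition second_diff :: "(real \<Rightarrow> real) \<Rightarrow> real \<Rightarrow> real \<Rightarrow> real" where
  "second_diff v x h = 2 * v x - v (x + h) - v (x - h)"

definition sym_frac_integrand :: "real \<Rightarrow> (real \<Rightarrow> real) \<Rightarrow> real \<Rightarrow> real \<Rightarrow> real" where
  "sym_frac_integrand s v x h = second_diff v x h / \<bar>h\<bar> powr (1 + 2 * s)"

lemma second_diff_minus [simp]: "second_diff v x (-h) = second_diff v x h"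
  by (simp add: second_diff_def)

lemma sym_frac_integrand_abs:
  assumes "\<And>y. v (-y) = v y"
  shows "sym_frac_integrand s v \<bar>x\<bar> h = sym_frac_integrand s v x h"
proof -
  have "second_diff v (-x) h = second_diff v x h"
    using assms[of "x - h"] assms[of "x + h"] assms[of x]
    unfolding second_diff_def by (smt (verit))
  then show ?thesis
    by (cases "0 \<le> x") (simp_all add: sym_frac_integrand_def)
qed

lemma second_diff_mean_value:
  fixes v v' v'' :: "real \<Rightarrow> real"
  assumes v': "\<And>y. (v has_real_derivative v' y) (at y)"
    and v'': "\<And>y. (v' has_real_derivative v'' y) (at y)"
  shows "\<exists>\<eta>. \<bar>\<eta> - x\<bar> \<le> \<bar>h\<bar> \<and> \<bar>second_diff v x h\<bar> \<le> 2 * h\<^sup>2 * \<bar>v'' \<eta>\<bar>"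
proof -
  have pos: "\<exists>\<eta>. \<bar>\<eta> - x\<bar> \<le> h \<and> \<bar>second_diff v x h\<bar> \<le> 2 * h\<^sup>2 * \<bar>v'' \<eta>\<bar>" if "0 < h" for h
  proof -
    define g where "g t = v (x + t) + v (x - t)" for t
    have "\<exists>\<xi>. 0 < \<xi> \<and> \<xi> < h \<and> g h - g 0 = (h - 0) * (v' (x + \<xi>) - v' (x - \<xi>))"
      unfolding g_def
      by (rule MVT2[OF that]) (auto intro!: derivative_eq_intros v'[THEN DERIV_chain2])
    then obtain \<xi> where \<xi>: "0 < \<xi>" "\<xi> < h" and g: "g h - g 0 = h * (v' (x + \<xi>) - v' (x - \<xi>))"
      by auto
    obtain \<eta> where \<eta>: "x - \<xi> < \<eta>" "\<eta> < x + \<xi>"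
      and v'_diff: "v' (x + \<xi>) - v' (x - \<xi>) = (x + \<xi> - (x - \<xi>)) * v'' \<eta>"
      using MVT2[of "x - \<xi>" "x + \<xi>" v' v''] \<xi> v'' by auto
    have "second_diff v x h = - (h * (2 * \<xi>) * v'' \<eta>)"
      using g v'_diff by (simp add: second_diff_def g_def)
    then have "\<bar>second_diff v x h\<bar> = h * (2 * \<xi>) * \<bar>v'' \<eta>\<bar>"
      using \<xi> by (simp add: abs_mult)
    also have "\<dots> \<le> 2 * h\<^sup>2 * \<bar>v'' \<eta>\<bar>"
      using \<xi> by (simp add: power2_eq_square mult_right_mono)
    finally show ?thesis
      using \<xi> \<eta> by (intro exI[of _ \<eta>]) auto
  qed
  consider "0 < h" | "h = 0" | "h < 0"
    by linarith
  then show ?thesis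
  proof cases
    case 1
    then show ?thesis using pos[of h] by auto
  next
    case 2
    then show ?thesis by (intro exI[of _ x]) (simp add: second_diff_def)
  next
    case 3
    then show ?thesis using pos[of "-h"] by auto
  qed
qed

lemma frac_trunc_eq_sym_integral:
  assumes "set_integrable lborel {y. \<epsilon> \<le> \<bar>x - y\<bar>} (\<lambda>y. (v x - v y) / \<bar>x - y\<bar> powr (1 + 2 * s))"
  shows "frac_trunc s v x \<epsilon> =
    (\<integral>h. indicator {t. \<epsilon> \<le> \<bar>t\<bar>} h * sym_frac_integrand s v x h \<partial>lborel) / 2"
proof -
  define f where
    "f y = indicator {y. \<epsilon> \<le> \<bar>x - y\<bar>} y * ((v x - v y) / \<bar>x - y\<bar> powr (1 + 2 * s))" for y
  have f: "integrable lborel f"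
    using assms by (simp add: set_integrable_def f_def[abs_def])
  have "frac_trunc s v x \<epsilon> = (\<integral>y. f y \<partial>lborel)"
    by (simp add: frac_trunc_def set_lebesgue_integral_def f_def)
  moreover have "(\<integral>y. f y \<partial>lborel) = (\<integral>h. f (x + h) \<partial>lborel)"
    using lborel_integral_real_affine[of 1 f x] by simp
  moreover have "(\<integral>y. f y \<partial>lborel) = (\<integral>h. f (x - h) \<partial>lborel)"
    using lborel_integral_real_affine[of "-1" f x] by simp
  moreover have "integrable lborel (\<lambda>h. f (x + h))" "integrable lborel (\<lambda>h. f (x - h))"
    using lborel_integrable_real_affine[OF f, of 1 x] lborel_integrable_real_affine[OF f, of "-1" x]
    by simp_all
  ultimately have "2 * frac_trunc s v x \<epsilon> = (\<integral>h. f (x + h) + f (x - h) \<partial>lborel)"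
    by simp
  also have "(\<lambda>h. f (x + h) + f (x - h)) =
      (\<lambda>h. indicator {t. \<epsilon> \<le> \<bar>t\<bar>} h * sym_frac_integrand s v x h)"
    by (simp add: fun_eq_iff f_def sym_frac_integrand_def second_diff_def indicator_def
        add_divide_distrib[symmetric] diff_divide_distrib[symmetric])
  finally show ?thesis
    by simp
qed

locale frac_regular =
  fixes s :: real and v :: "real \<Rightarrow> real" and M K :: real
  assumes s_pos: "0 < s" and s_less_1: "s < 1"
    and measurable_v [measurable]: "v \<in> borel_measurable borel"
    and abs_le_M: "\<And>y. \<bar>v y\<bar> \<le> M"
    and abs_second_diff_le: "\<And>x h. \<bar>second_diff v x h\<bar> \<le> K * h\<^sup>2"
begin

lemma M_nonneg: "0 \<le> M"
  using abs_le_M[of 0] by linarith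

lemma K_nonneg: "0 \<le> K"
  using abs_second_diff_le[of 0 1] by simp

lemma abs_second_diff_le_M: "\<bar>second_diff v x h\<bar> \<le> 4 * M"
  using abs_le_M[of x] abs_le_M[of "x + h"] abs_le_M[of "x - h"]
  unfolding second_diff_def by linarith

lemma measurable_sym_frac_integrand_pair [measurable]:
  "(\<lambda>(x, h). sym_frac_integrand s v x h) \<in> borel_measurable (lborel \<Otimes>\<^sub>M lborel)"
  unfolding sym_frac_integrand_def second_diff_def by measurable

lemma measurable_sym_frac_integrand [measurable]: "sym_frac_integrand s v x \<in> borel_measurable borel"
  unfolding sym_frac_integrand_def[abs_def] second_diff_def by measurable

definition majorant :: "real \<Rightarrow> real" where
  "majorant h = K * abs_powr_inside (1 - 2 * s) 1 h + 4 * M * abs_powr_outside (-(1 + 2 * s)) 1 h"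

lemma integrable_majorant: "integrable lborel majorant"
  using integrable_abs_powr_inside[of "1 - 2 * s" 1] integrable_abs_powr_outside[of "-(1 + 2 * s)" 1]
    s_pos s_less_1
  unfolding majorant_def[abs_def] by auto

lemma majorant_nonneg: "0 \<le> majorant h"
  unfolding majorant_def using K_nonneg M_nonneg
  by (intro add_nonneg_nonneg mult_nonneg_nonneg abs_powr_inside_nonneg abs_powr_outside_nonneg) auto

lemma abs_sym_frac_integrand_le_majorant: "\<bar>sym_frac_integrand s v x h\<bar> \<le> majorant h"
proof -
  have "\<bar>sym_frac_integrand s v x h\<bar> \<le> majorant h" if "h \<noteq> 0"
  proof (cases "\<bar>h\<bar> \<le> 1")
    case True
    have "\<bar>sym_frac_integrand s v x h\<bar> \<le> K * h\<^sup>2 / \<bar>h\<bar> powr (1 + 2 * s)"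
      unfolding sym_frac_integrand_def using abs_second_diff_le[of x h]
      by (simp add: divide_right_mono)
    also have "\<dots> = K * (h\<^sup>2 / \<bar>h\<bar> powr (1 + 2 * s))"
      by simp
    also have "\<dots> = K * \<bar>h\<bar> powr (1 - 2 * s)"
      by (simp add: power2_div_abs_powr[OF \<open>h \<noteq> 0\<close>])
    also have "\<dots> \<le> majorant h"
      using True M_nonneg abs_powr_outside_nonneg[of "-(1 + 2 * s)" 1 h]
      by (simp add: majorant_def abs_powr_inside_def abs_le_iff)
    finally show ?thesis .
  next
    case False
    have "\<bar>sym_frac_integrand s v x h\<bar> \<le> 4 * M / \<bar>h\<bar> powr (1 + 2 * s)"
      unfolding sym_frac_integrand_def using abs_second_diff_le_M[of x h]
      by (simp add: divide_right_mono)
    also have "\<dots> = 4 * M * \<bar>h\<bar> powr (-(1 + 2 * s))"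
      unfolding powr_minus_divide by simp
    also have "\<dots> \<le> majorant h"
      using False K_nonneg abs_powr_inside_nonneg[of "1 - 2 * s" 1 h]
      by (simp add: majorant_def abs_powr_outside_def)
    finally show ?thesis .
  qed
  then show ?thesis
    using majorant_nonneg[of h] by (cases "h = 0") (auto simp: sym_frac_integrand_def)
qed

lemma integrable_sym_frac_integrand: "integrable lborel (sym_frac_integrand s v x)"
  using abs_sym_frac_integrand_le_majorant majorant_nonneg
  by (intro Bochner_Integration.integrable_bound[OF integrable_majorant] AE_I2) auto

lemma set_integrable_frac_trunc:
  assumes "0 < \<epsilon>"
  shows "set_integrable lborel {y. \<epsilon> \<le> \<bar>x - y\<bar>} (\<lambda>y. (v x - v y) / \<bar>x - y\<bar> powr (1 + 2 * s))"
  unfolding set_integrable_def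
proof (rule Bochner_Integration.integrable_bound)
  show "integrable lborel (\<lambda>y. 2 * M * abs_powr_outside (-(1 + 2 * s)) \<epsilon> (x + (-1) * y))"
    using integrable_abs_powr_outside[of "-(1 + 2 * s)" \<epsilon>] s_pos assms
    by (intro integrable_mult_right lborel_integrable_real_affine) auto
  show "AE y in lborel.
      norm (indicator {y. \<epsilon> \<le> \<bar>x - y\<bar>} y *\<^sub>R ((v x - v y) / \<bar>x - y\<bar> powr (1 + 2 * s)))
      \<le> norm (2 * M * abs_powr_outside (-(1 + 2 * s)) \<epsilon> (x + (-1) * y))"
  proof (rule AE_I2)
    fix y
    have "\<bar>v x - v y\<bar> / \<bar>x - y\<bar> powr (1 + 2 * s) \<le> 2 * M / \<bar>x - y\<bar> powr (1 + 2 * s)"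
      using abs_le_M[of x] abs_le_M[of y] by (intro divide_right_mono) auto
    also have "\<dots> = 2 * M * \<bar>x - y\<bar> powr (-(1 + 2 * s))"
      unfolding powr_minus_divide by simp
    finally show "norm (indicator {y. \<epsilon> \<le> \<bar>x - y\<bar>} y *\<^sub>R ((v x - v y) / \<bar>x - y\<bar> powr (1 + 2 * s)))
      \<le> norm (2 * M * abs_powr_outside (-(1 + 2 * s)) \<epsilon> (x + (-1) * y))"
      using M_nonneg by (auto simp: abs_powr_outside_def indicator_def abs_mult)
  qed
qed simp

lemma tendsto_truncated_sym_integral:
  "((\<lambda>r. \<integral>h. indicator {t. inverse r \<le> \<bar>t\<bar>} h * sym_frac_integrand s v x h \<partial>lborel)
    \<longlongrightarrow> (\<integral>h. sym_frac_integrand s v x h \<partial>lborel)) at_top"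
proof (rule integral_dominated_convergence_at_top[where w = majorant])
  show "AE h in lborel. ((\<lambda>r. indicator {t. inverse r \<le> \<bar>t\<bar>} h * sym_frac_integrand s v x h)
    \<longlongrightarrow> sym_frac_integrand s v x h) at_top"
  proof (rule AE_I2)
    fix h :: real
    have "\<forall>\<^sub>F r in at_top. indicator {t. inverse r \<le> \<bar>t\<bar>} h * sym_frac_integrand s v x h
        = sym_frac_integrand s v x h"
    proof (cases "h = 0")
      case False
      have "\<forall>\<^sub>F r in at_top. inverse \<bar>h\<bar> \<le> r"
        by (simp add: eventually_ge_at_top)
      then show ?thesis
      proof eventually_elim
        case (elim r)
        then have "inverse r \<le> \<bar>h\<bar>"
          using False
          by (metis inverse_inverse_eq inverse_le_imp_le positive_imp_inverse_positive zero_less_abs_iff)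
        then show ?case
          by simp
      qed
    qed (simp add: sym_frac_integrand_def)
    then show "((\<lambda>r. indicator {t. inverse r \<le> \<bar>t\<bar>} h * sym_frac_integrand s v x h)
        \<longlongrightarrow> sym_frac_integrand s v x h) at_top"
      by (rule tendsto_eventually)
  qed
  show "\<forall>\<^sub>F r in at_top. AE h in lborel.
      norm (indicator {t. inverse r \<le> \<bar>t\<bar>} h * sym_frac_integrand s v x h) \<le> majorant h"
    using abs_sym_frac_integrand_le_majorant majorant_nonneg
    by (intro always_eventually allI AE_I2) (auto simp: indicator_def)
qed (simp_all add: integrable_majorant)

lemma frac_trunc_tendsto:
  "(frac_trunc s v x \<longlongrightarrow> (\<integral>h. sym_frac_integrand s v x h \<partial>lborel) / 2) (at_right 0)"
proof -
  let ?I = "\<lambda>r. \<integral>h. indicator {t. inverse r \<le> \<bar>t\<bar>} h * sym_frac_integrand s v x h \<partial>lborel"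
  have "((\<lambda>r. ?I r / 2) \<longlongrightarrow> (\<integral>h. sym_frac_integrand s v x h \<partial>lborel) / 2) at_top"
    using tendsto_truncated_sym_integral by (rule tendsto_divide[OF _ tendsto_const]) simp
  moreover have "\<forall>\<^sub>F r in at_top. ?I r / 2 = frac_trunc s v x (inverse r)"
    using eventually_gt_at_top[of 0]
  proof eventually_elim
    case (elim r)
    then have "0 < inverse r"
      by simp
    then show ?case
      by (simp only: frac_trunc_eq_sym_integral[OF set_integrable_frac_trunc])
  qed
  ultimately have "((\<lambda>r. frac_trunc s v x (inverse r))
      \<longlongrightarrow> (\<integral>h. sym_frac_integrand s v x h \<partial>lborel) / 2) at_top"
    by (rule Lim_transform_eventually)
  then show ?thesis
    unfolding filterlim_at_right_to_top .
qed

lemma frac_lap_eq: "frac_lap s v x = frac_const s * (\<integral>h. sym_frac_integrand s v x h \<partial>lborel) / 2"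
  using tendsto_Lim[OF _ frac_trunc_tendsto] by (simp add: frac_lap_def)

lemma abs_frac_lap_le: "\<bar>frac_lap s v x\<bar> \<le> \<bar>frac_const s\<bar> * integral\<^sup>L lborel majorant / 2"
proof -
  have "\<bar>\<integral>h. sym_frac_integrand s v x h \<partial>lborel\<bar> \<le> integral\<^sup>L lborel majorant"
    by (rule integral_abs_bound_integral[OF integrable_sym_frac_integrand integrable_majorant])
      (rule abs_sym_frac_integrand_le_majorant)
  then show ?thesis
    unfolding frac_lap_eq abs_divide abs_mult by (simp add: mult_left_mono divide_right_mono)
qed

lemma measurable_frac_lap: "frac_lap s v \<in> borel_measurable borel"
proof -
  have "(\<lambda>x. \<integral>h. sym_frac_integrand s v x h \<partial>lborel) \<in> borel_measurable borel"
    using lborel.borel_measurable_lebesgue_integral[OF measurable_sym_frac_integrand_pair] by simp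
  then have "(\<lambda>x. frac_const s * (\<integral>h. sym_frac_integrand s v x h \<partial>lborel) / 2) \<in> borel_measurable borel"
    by (intro borel_measurable_divide borel_measurable_times borel_measurable_const)
  moreover have "frac_lap s v = (\<lambda>x. frac_const s * (\<integral>h. sym_frac_integrand s v x h \<partial>lborel) / 2)"
    by (rule ext) (rule frac_lap_eq)
  ultimately show ?thesis
    by (simp only:)
qed

end

section \<open>The function x \<mapsto> (1 + x^2) powr (-\<beta>/2)\<close>

definition bracket_powr :: "real \<Rightarrow> real \<Rightarrow> real" where
  "bracket_powr \<beta> x = (1 + x\<^sup>2) powr (-\<beta> / 2)"

lemma one_plus_square_pos: "0 < 1 + (x::real)\<^sup>2"
  by (simp add: add_pos_nonneg)

lemma powr_one_plus_square_diff_1: "(1 + x\<^sup>2 :: real) powr (a - 1) = (1 + x\<^sup>2) powr a / (1 + x\<^sup>2)"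
  using one_plus_square_pos[of x] by (simp add: powr_diff)

lemma measurable_bracket_powr [measurable]: "bracket_powr \<beta> \<in> borel_measurable borel"
  unfolding bracket_powr_def[abs_def] by measurable

lemma bracket_powr_minus [simp]: "bracket_powr \<beta> (-x) = bracket_powr \<beta> x"
  by (simp add: bracket_powr_def)

lemma bracket_powr_pos: "0 < bracket_powr \<beta> x"
  unfolding bracket_powr_def using one_plus_square_pos[of x] by simp

lemma bracket_powr_le_1: "0 \<le> \<beta> \<Longrightarrow> bracket_powr \<beta> x \<le> 1"
  unfolding bracket_powr_def using powr_mono2'[of "-\<beta>/2" 1 "1 + x\<^sup>2"] by simp

lemma bracket_powr_le_abs_powr:
  assumes "0 \<le> \<beta>" "x \<noteq> 0"
  shows "bracket_powr \<beta> x \<le> \<bar>x\<bar> powr (-\<beta>)"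
proof -
  have "bracket_powr \<beta> x \<le> (x\<^sup>2) powr (-\<beta>/2)"
    unfolding bracket_powr_def using assms by (intro powr_mono2') auto
  also have "\<dots> = \<bar>x\<bar> powr (-\<beta>)"
    using power2_powr[OF \<open>x \<noteq> 0\<close>] by simp
  finally show ?thesis .
qed

lemma not_in_Lp_bracket_powr:
  assumes "0 \<le> \<beta> * p" "\<beta> * p < 1"
  shows "\<not> in_Lp p (bracket_powr \<beta>)"
proof -
  define k where "k = 2 powr (-\<beta> * p / 2)"
  have "k / x \<le> \<bar>bracket_powr \<beta> x\<bar> powr p" if "1 \<le> x" for x
  proof -
    have "k / x = k * x powr (-1)"
      using that by (simp add: powr_minus divide_inverse)
    also have "\<dots> \<le> k * x powr (-\<beta> * p)"
      using that assms(2) by (intro mult_left_mono powr_mono) (auto simp: k_def)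
    also have "\<dots> = (2 * x\<^sup>2) powr (-\<beta> * p / 2)"
      using that power2_powr[of x "-\<beta> * p / 2"] by (simp add: k_def powr_mult)
    also have "\<dots> \<le> (1 + x\<^sup>2) powr (-\<beta> * p / 2)"
      using that assms(1) one_le_power[of x 2] one_plus_square_pos[of x]
      by (intro powr_mono2') auto
    also have "\<dots> = \<bar>bracket_powr \<beta> x\<bar> powr p"
      using bracket_powr_pos[of \<beta> x] by (simp add: bracket_powr_def powr_powr)
    finally show ?thesis .
  qed
  then have "\<not> integrable lborel (\<lambda>x. \<bar>bracket_powr \<beta> x\<bar> powr p)"
    by (intro not_integrable_if_ge_inverse[where k = k]) (auto simp: k_def)
  then show ?thesis
    by (simp add: in_Lp_def)
qed

lemma bracket_powr_has_derivative:
  "(bracket_powr \<beta> has_real_derivative -\<beta> * x * (1 + x\<^sup>2) powr (-\<beta>/2 - 1)) (at x)"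
  unfolding bracket_powr_def[abs_def] using one_plus_square_pos[of x]
  by (auto intro!: derivative_eq_intros
      simp: powr_one_plus_square_diff_1[of x "-\<beta>/2"] field_simps)

lemma bracket_powr_deriv_has_derivative:
  "((\<lambda>x. -\<beta> * x * (1 + x\<^sup>2) powr (-\<beta>/2 - 1)) has_real_derivative
     -\<beta> * (1 + x\<^sup>2) powr (-\<beta>/2 - 1) + \<beta> * (\<beta> + 2) * x\<^sup>2 * (1 + x\<^sup>2) powr (-\<beta>/2 - 2)) (at x)"
  using one_plus_square_pos[of x]
  by (auto intro!: derivative_eq_intros
      simp: powr_one_plus_square_diff_1[of x "-\<beta>/2 - 1"] field_simps power2_eq_square)

lemma abs_bracket_powr_deriv2_le:
  fixes \<beta> x :: real
  assumes "0 \<le> \<beta>" "\<beta> \<le> 1"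
  shows "\<bar>-\<beta> * (1 + x\<^sup>2) powr (-\<beta>/2 - 1) + \<beta> * (\<beta> + 2) * x\<^sup>2 * (1 + x\<^sup>2) powr (-\<beta>/2 - 2)\<bar>
    \<le> 3 * (1 + x\<^sup>2) powr (-\<beta>/2 - 1)"
proof -
  define P where "P = (1 + x\<^sup>2) powr (-\<beta>/2 - 1)"
  define q where "q = x\<^sup>2 / (1 + x\<^sup>2)"
  have "0 \<le> q" "q \<le> 1"
    unfolding q_def using one_plus_square_pos[of x] by auto
  have "(1 + x\<^sup>2) powr (-\<beta>/2 - 2) = (1 + x\<^sup>2) powr ((-\<beta>/2 - 1) - 1)"
    by (intro arg_cong[where f = "(powr) (1 + x\<^sup>2)"]) linarith
  also have "\<dots> = P / (1 + x\<^sup>2)"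
    unfolding P_def by (rule powr_one_plus_square_diff_1)
  finally have "(1 + x\<^sup>2) powr (-\<beta>/2 - 2) = P / (1 + x\<^sup>2)" .
  then have "\<bar>-\<beta> * (1 + x\<^sup>2) powr (-\<beta>/2 - 1) + \<beta> * (\<beta> + 2) * x\<^sup>2 * (1 + x\<^sup>2) powr (-\<beta>/2 - 2)\<bar>
      = \<bar>P * (-\<beta> + \<beta> * (\<beta> + 2) * q)\<bar>"
    by (simp add: P_def q_def field_simps)
  also have "\<dots> \<le> P * 3"
  proof -
    have "\<beta> * (\<beta> + 2) \<le> 1 * 3"
      using assms by (intro mult_mono) auto
    moreover have "\<beta> * (\<beta> + 2) * q \<le> \<beta> * (\<beta> + 2)" "0 \<le> \<beta> * (\<beta> + 2) * q"
      using \<open>0 \<le> q\<close> \<open>q \<le> 1\<close> assms by (auto intro: mult_left_le)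
    ultimately have "\<bar>-\<beta> + \<beta> * (\<beta> + 2) * q\<bar> \<le> 3"
      using assms by linarith
    moreover have "0 < P"
      unfolding P_def using one_plus_square_pos[of x] by simp
    ultimately show ?thesis
      by (simp add: abs_mult)
  qed
  finally show ?thesis
    by (simp add: P_def mult.commute)
qed

lemma bracket_powr_second_diff_le:
  assumes "0 \<le> \<beta>" "\<beta> \<le> 1"
  shows "\<exists>\<eta>. \<bar>\<eta> - x\<bar> \<le> \<bar>h\<bar> \<and> \<bar>second_diff (bracket_powr \<beta>) x h\<bar> \<le> 6 * h\<^sup>2 * (1 + \<eta>\<^sup>2) powr (-\<beta>/2 - 1)"
proof -
  obtain \<eta> where \<eta>: "\<bar>\<eta> - x\<bar> \<le> \<bar>h\<bar>"
    and second_diff_le: "\<bar>second_diff (bracket_powr \<beta>) x h\<bar> \<le> 2 * h\<^sup>2 *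
      \<bar>-\<beta> * (1 + \<eta>\<^sup>2) powr (-\<beta>/2 - 1) + \<beta> * (\<beta> + 2) * \<eta>\<^sup>2 * (1 + \<eta>\<^sup>2) powr (-\<beta>/2 - 2)\<bar>"
    using second_diff_mean_value[OF bracket_powr_has_derivative bracket_powr_deriv_has_derivative]
    by blast
  note second_diff_le
  also have "\<dots> \<le> 2 * h\<^sup>2 * (3 * (1 + \<eta>\<^sup>2) powr (-\<beta>/2 - 1))"
    using abs_bracket_powr_deriv2_le[OF assms] by (intro mult_left_mono) auto
  finally show ?thesis
    using \<eta> by (intro exI[of _ \<eta>]) simp
qed

lemma frac_regular_bracket_powr:
  assumes "0 < s" "s < 1" "0 \<le> \<beta>" "\<beta> \<le> 1"
  shows "frac_regular s (bracket_powr \<beta>) 1 6"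
proof
  show "\<bar>bracket_powr \<beta> y\<bar> \<le> 1" for y
    using bracket_powr_pos[of \<beta> y] bracket_powr_le_1[OF assms(3)] by simp
  show "\<bar>second_diff (bracket_powr \<beta>) x h\<bar> \<le> 6 * h\<^sup>2" for x h
  proof -
    obtain \<eta> where "\<bar>second_diff (bracket_powr \<beta>) x h\<bar> \<le> 6 * h\<^sup>2 * (1 + \<eta>\<^sup>2) powr (-\<beta>/2 - 1)"
      using bracket_powr_second_diff_le[OF assms(3,4)] by blast
    moreover have "(1 + \<eta>\<^sup>2) powr (-\<beta>/2 - 1) \<le> 1"
      using powr_mono2'[of "-\<beta>/2 - 1" 1 "1 + \<eta>\<^sup>2"] assms by simp
    ultimately show ?thesis
      by (smt (verit) mult_left_le zero_le_power2)
  qed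
qed (use assms in auto)

lemma abs_second_diff_bracket_powr_near:
  assumes "0 \<le> \<beta>" "\<beta> \<le> 1" "x \<noteq> 0" "\<bar>h\<bar> \<le> \<bar>x\<bar> / 2"
  shows "\<bar>second_diff (bracket_powr \<beta>) x h\<bar> \<le> 48 * h\<^sup>2 * \<bar>x\<bar> powr (-\<beta> - 2)"
proof -
  obtain \<eta> where \<eta>: "\<bar>\<eta> - x\<bar> \<le> \<bar>h\<bar>"
    and second_diff_le: "\<bar>second_diff (bracket_powr \<beta>) x h\<bar> \<le> 6 * h\<^sup>2 * (1 + \<eta>\<^sup>2) powr (-\<beta>/2 - 1)"
    using bracket_powr_second_diff_le[OF assms(1,2)] by blast
  have "(\<bar>x\<bar> / 2)\<^sup>2 \<le> 1 + \<eta>\<^sup>2"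
  proof -
    have "\<bar>x\<bar> / 2 \<le> \<bar>\<eta>\<bar>"
      using \<eta> assms(4) by linarith
    then have "(\<bar>x\<bar> / 2)\<^sup>2 \<le> \<eta>\<^sup>2"
      by (metis abs_of_nonneg abs_le_square_iff abs_ge_zero divide_nonneg_pos zero_less_numeral)
    then show ?thesis
      by simp
  qed
  then have "(1 + \<eta>\<^sup>2) powr (-\<beta>/2 - 1) \<le> ((\<bar>x\<bar> / 2)\<^sup>2) powr (-\<beta>/2 - 1)"
    using assms by (intro powr_mono2') auto
  also have "\<dots> = (\<bar>x\<bar> / 2) powr (-\<beta> - 2)"
    using power2_powr[of "\<bar>x\<bar> / 2" "-\<beta>/2 - 1"] assms(3) by simp
  also have "\<dots> = \<bar>x\<bar> powr (-\<beta> - 2) / 2 powr (-\<beta> - 2)"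
    by (simp add: powr_divide)
  also have "\<dots> = 2 powr (\<beta> + 2) * \<bar>x\<bar> powr (-\<beta> - 2)"
    using powr_minus[of 2 "\<beta> + 2"] by (simp add: divide_inverse)
  also have "\<dots> \<le> 2 powr 3 * \<bar>x\<bar> powr (-\<beta> - 2)"
    using assms(2) by (intro mult_right_mono powr_mono) auto
  finally have "(1 + \<eta>\<^sup>2) powr (-\<beta>/2 - 1) \<le> 8 * \<bar>x\<bar> powr (-\<beta> - 2)"
    by simp
  then have "6 * h\<^sup>2 * (1 + \<eta>\<^sup>2) powr (-\<beta>/2 - 1) \<le> 6 * h\<^sup>2 * (8 * \<bar>x\<bar> powr (-\<beta> - 2))"
    by (intro mult_left_mono) auto
  with second_diff_le show ?thesis
    by simp
qed

lemma abs_second_diff_bracket_powr_far: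
  assumes "0 \<le> \<beta>" "x \<noteq> 0" "x + h \<noteq> 0" "x - h \<noteq> 0"
  shows "\<bar>second_diff (bracket_powr \<beta>) x h\<bar> \<le> 2 * \<bar>x\<bar> powr (-\<beta>) + \<bar>x + h\<bar> powr (-\<beta>) + \<bar>x - h\<bar> powr (-\<beta>)"
  using bracket_powr_le_abs_powr[OF assms(1,2)] bracket_powr_le_abs_powr[OF assms(1,3)]
    bracket_powr_le_abs_powr[OF assms(1,4)] bracket_powr_pos[of \<beta> x]
    bracket_powr_pos[of \<beta> "x + h"] bracket_powr_pos[of \<beta> "x - h"]
  unfolding second_diff_def by linarith

text \<open>A majorant of the symmetrised integrand at h = |x| t, rescaled by |x|^(beta+1+2s): the first
  term comes from the second-derivative bound for |t| \<le> 1/2, the others from u(y) \<le> |y|^(-beta)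
  for |t| \<ge> 1/2.\<close>

definition decay_profile :: "real \<Rightarrow> real \<Rightarrow> real \<Rightarrow> real" where
  "decay_profile s \<beta> t =
     48 * abs_powr_inside (1 - 2 * s) (1/2) t + 4 * abs_powr_outside (-(1 + 2 * s)) (1/2) t
     + 8 * abs_powr_inside (-\<beta>) 1 (1 + t) + 8 * abs_powr_inside (-\<beta>) 1 (1 - t)"

lemma decay_profile_nonneg: "0 \<le> decay_profile s \<beta> t"
  unfolding decay_profile_def
  by (intro add_nonneg_nonneg mult_nonneg_nonneg abs_powr_inside_nonneg abs_powr_outside_nonneg) auto

lemma integrable_decay_profile:
  assumes "0 < s" "s < 1" "\<beta> < 1"
  shows "integrable lborel (decay_profile s \<beta>)"
proof -
  have "integrable lborel (abs_powr_inside (-\<beta>) 1)"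
    using assms by (intro integrable_abs_powr_inside) auto
  then have "integrable lborel (\<lambda>t. abs_powr_inside (-\<beta>) 1 (1 + c * t))" if "c \<noteq> 0" for c
    using that by (rule lborel_integrable_real_affine)
  from this[of 1] this[of "-1"]
  have "integrable lborel (\<lambda>t. abs_powr_inside (-\<beta>) 1 (1 + t))"
    "integrable lborel (\<lambda>t. abs_powr_inside (-\<beta>) 1 (1 - t))"
    by simp_all
  moreover have "integrable lborel (abs_powr_inside (1 - 2 * s) (1/2))"
    "integrable lborel (abs_powr_outside (-(1 + 2 * s)) (1/2))"
    using assms by (intro integrable_abs_powr_inside integrable_abs_powr_outside; simp)+
  ultimately show ?thesis
    unfolding decay_profile_def[abs_def] by auto
qed

lemma abs_powr_mult_tail_le:
  assumes "0 \<le> \<beta>" "0 < s" "s < 1" "1/2 \<le> \<bar>t\<bar>" "w \<noteq> 0"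
  shows "\<bar>w\<bar> powr (-\<beta>) * \<bar>t\<bar> powr (-(1 + 2 * s))
    \<le> 8 * abs_powr_inside (-\<beta>) 1 w + abs_powr_outside (-(1 + 2 * s)) (1/2) t"
proof (cases "\<bar>w\<bar> \<le> 1")
  case True
  have "\<bar>t\<bar> powr (-(1 + 2 * s)) \<le> (1/2) powr (-(1 + 2 * s))"
    using assms by (intro powr_mono2') auto
  also have "\<dots> = 2 powr (1 + 2 * s)"
    unfolding powr_minus_divide by (simp add: powr_divide)
  also have "\<dots> \<le> 2 powr 3"
    using assms by (intro powr_mono) auto
  finally have "\<bar>w\<bar> powr (-\<beta>) * \<bar>t\<bar> powr (-(1 + 2 * s)) \<le> \<bar>w\<bar> powr (-\<beta>) * 8"
    by (intro mult_left_mono) auto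
  then show ?thesis
    using True abs_powr_outside_nonneg[of "-(1 + 2 * s)" "1/2" t]
    by (auto simp: abs_powr_inside_def abs_le_iff)
next
  case False
  have "\<bar>w\<bar> powr (-\<beta>) \<le> 1"
    using False assms powr_mono2'[of "-\<beta>" 1 "\<bar>w\<bar>"] by simp
  then have "\<bar>w\<bar> powr (-\<beta>) * \<bar>t\<bar> powr (-(1 + 2 * s)) \<le> \<bar>t\<bar> powr (-(1 + 2 * s))"
    using mult_right_mono[of _ 1 "\<bar>t\<bar> powr (-(1 + 2 * s))"] by simp
  then show ?thesis
    using assms abs_powr_inside_nonneg[of "-\<beta>" 1 w]
    by (simp add: abs_powr_outside_def)
qed

lemma abs_second_diff_bracket_powr_scaled_near:
  assumes "0 \<le> \<beta>" "\<beta> \<le> 1" "0 < r" "t \<noteq> 0" "\<bar>t\<bar> \<le> 1/2"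
  shows "\<bar>second_diff (bracket_powr \<beta>) r (r * t)\<bar> * \<bar>t\<bar> powr (-(1 + 2 * s))
    \<le> r powr (-\<beta>) * decay_profile s \<beta> t"
proof -
  have "\<bar>r * t\<bar> \<le> \<bar>r\<bar> / 2"
    using mult_left_mono[OF assms(5), of r] assms(3) by (simp add: abs_mult)
  then have "\<bar>second_diff (bracket_powr \<beta>) r (r * t)\<bar> \<le> 48 * (r * t)\<^sup>2 * \<bar>r\<bar> powr (-\<beta> - 2)"
    using assms by (intro abs_second_diff_bracket_powr_near) auto
  also have "\<dots> = r powr (-\<beta>) * (48 * t\<^sup>2)"
  proof -
    have "r\<^sup>2 = r powr 2"
      using assms(3) by (simp add: powr_realpow[of r 2, simplified])
    then have "r\<^sup>2 * r powr (-\<beta> - 2) = r powr (2 + (-\<beta> - 2))"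
      by (simp only: powr_add)
    then have "r\<^sup>2 * r powr (-\<beta> - 2) = r powr (-\<beta>)"
      by simp
    then show ?thesis
      using assms(3) by (simp add: power_mult_distrib mult_ac)
  qed
  finally have "\<bar>second_diff (bracket_powr \<beta>) r (r * t)\<bar> * \<bar>t\<bar> powr (-(1 + 2 * s))
      \<le> r powr (-\<beta>) * (48 * t\<^sup>2) * \<bar>t\<bar> powr (-(1 + 2 * s))"
    by (rule mult_right_mono) simp
  also have "\<dots> = r powr (-\<beta>) * (48 * \<bar>t\<bar> powr (1 - 2 * s))"
  proof -
    have "t\<^sup>2 * \<bar>t\<bar> powr (-(1 + 2 * s)) = \<bar>t\<bar> powr (1 - 2 * s)"
      using power2_div_abs_powr[OF assms(4), of "1 + 2 * s"]
      unfolding powr_minus_divide by simp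
    then show ?thesis
      by (simp only: mult.assoc)
  qed
  also have "\<dots> \<le> r powr (-\<beta>) * decay_profile s \<beta> t"
  proof (intro mult_left_mono)
    have "abs_powr_inside (1 - 2 * s) (1/2) t = \<bar>t\<bar> powr (1 - 2 * s)"
      using assms(5) by (auto simp: abs_powr_inside_def indicator_def abs_le_iff)
    then show "48 * \<bar>t\<bar> powr (1 - 2 * s) \<le> decay_profile s \<beta> t"
      using abs_powr_outside_nonneg[of "-(1 + 2 * s)" "1/2" t]
        abs_powr_inside_nonneg[of "-\<beta>" 1 "1 + t"] abs_powr_inside_nonneg[of "-\<beta>" 1 "1 - t"]
      unfolding decay_profile_def by linarith
  qed simp
  finally show ?thesis .
qed

lemma abs_second_diff_bracket_powr_scaled_far:
  assumes "0 < s" "s < 1" "0 \<le> \<beta>" "0 < r" "1/2 \<le> \<bar>t\<bar>" "t \<noteq> 1" "t \<noteq> -1"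
  shows "\<bar>second_diff (bracket_powr \<beta>) r (r * t)\<bar> * \<bar>t\<bar> powr (-(1 + 2 * s))
    \<le> r powr (-\<beta>) * decay_profile s \<beta> t"
proof -
  define \<sigma> where "\<sigma> = 1 + 2 * s"
  have "\<bar>second_diff (bracket_powr \<beta>) r (r * t)\<bar>
      \<le> 2 * r powr (-\<beta>) + \<bar>r * (1 + t)\<bar> powr (-\<beta>) + \<bar>r * (1 - t)\<bar> powr (-\<beta>)"
  proof -
    have "r * (1 + t) \<noteq> 0" "r * (1 - t) \<noteq> 0"
      using assms by auto
    then show ?thesis
      using abs_second_diff_bracket_powr_far[of \<beta> r "r * t"] assms
      by (simp add: algebra_simps)
  qed
  also have "\<dots> = r powr (-\<beta>) * (2 + \<bar>1 + t\<bar> powr (-\<beta>) + \<bar>1 - t\<bar> powr (-\<beta>))"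
    using assms(4) unfolding abs_mult by (simp add: powr_mult distrib_left)
  finally have "\<bar>second_diff (bracket_powr \<beta>) r (r * t)\<bar> * \<bar>t\<bar> powr (-\<sigma>)
      \<le> r powr (-\<beta>) * (2 + \<bar>1 + t\<bar> powr (-\<beta>) + \<bar>1 - t\<bar> powr (-\<beta>)) * \<bar>t\<bar> powr (-\<sigma>)"
    by (rule mult_right_mono) simp
  also have "\<dots> = r powr (-\<beta>) * (2 * \<bar>t\<bar> powr (-\<sigma>) + \<bar>1 + t\<bar> powr (-\<beta>) * \<bar>t\<bar> powr (-\<sigma>)
      + \<bar>1 - t\<bar> powr (-\<beta>) * \<bar>t\<bar> powr (-\<sigma>))"
    by (simp add: algebra_simps)
  also have "\<dots> \<le> r powr (-\<beta>) * decay_profile s \<beta> t"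
    using abs_powr_mult_tail_le[of \<beta> s t "1 + t"] abs_powr_mult_tail_le[of \<beta> s t "1 - t"]
      assms abs_powr_inside_nonneg[of "1 - 2 * s" "1/2" t]
    by (intro mult_left_mono) (auto simp: decay_profile_def abs_powr_outside_def \<sigma>_def)
  finally show ?thesis
    unfolding \<sigma>_def .
qed

text \<open>The points t = \<plusminus>1, where x \<plusminus> h = 0, are excluded because |0| powr (-beta) = 0 in
  Isabelle, so u(y) \<le> |y| powr (-beta) fails at y = 0; they form a null set.\<close>

lemma abs_sym_frac_integrand_bracket_powr_scaled:
  assumes "0 < s" "s < 1" "0 \<le> \<beta>" "\<beta> \<le> 1" "0 < r" "t \<noteq> 1" "t \<noteq> -1"
  shows "\<bar>sym_frac_integrand s (bracket_powr \<beta>) r (r * t)\<bar>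
    \<le> r powr (-\<beta> - (1 + 2 * s)) * decay_profile s \<beta> t"
proof (cases "t = 0")
  case True
  then show ?thesis
    using assms(5) decay_profile_nonneg[of s \<beta> t] by (simp add: sym_frac_integrand_def)
next
  case False
  define \<sigma> where "\<sigma> = 1 + 2 * s"
  have "\<bar>second_diff (bracket_powr \<beta>) r (r * t)\<bar> * \<bar>t\<bar> powr (-\<sigma>) \<le> r powr (-\<beta>) * decay_profile s \<beta> t"
    unfolding \<sigma>_def
    using abs_second_diff_bracket_powr_scaled_near[of \<beta> r t s]
      abs_second_diff_bracket_powr_scaled_far[of s \<beta> r t] assms False
    by (cases "\<bar>t\<bar> \<le> 1/2") auto
  then have "r powr (-\<sigma>) * (\<bar>second_diff (bracket_powr \<beta>) r (r * t)\<bar> * \<bar>t\<bar> powr (-\<sigma>))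
      \<le> r powr (-\<sigma>) * (r powr (-\<beta>) * decay_profile s \<beta> t)"
    by (intro mult_left_mono) auto
  moreover have "sym_frac_integrand s (bracket_powr \<beta>) r (r * t)
      = second_diff (bracket_powr \<beta>) r (r * t) / (r powr \<sigma> * \<bar>t\<bar> powr \<sigma>)"
    using assms(5) by (simp add: sym_frac_integrand_def \<sigma>_def abs_mult powr_mult)
  ultimately show ?thesis
    unfolding \<sigma>_def[symmetric]
    by (simp add: abs_mult powr_minus powr_diff divide_inverse mult_ac)
qed

lemma abs_frac_lap_bracket_powr_le:
  assumes "0 < s" "s < 1" "0 \<le> \<beta>" "\<beta> < 1" "x \<noteq> 0"
  shows "\<bar>frac_lap s (bracket_powr \<beta>) x\<bar>
    \<le> \<bar>frac_const s\<bar> * (\<integral>t. decay_profile s \<beta> t \<partial>lborel) / 2 * \<bar>x\<bar> powr (-\<beta> - 2 * s)"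
proof -
  interpret frac_regular s "bracket_powr \<beta>" 1 6
    using assms by (intro frac_regular_bracket_powr) auto
  define r where "r = \<bar>x\<bar>"
  have "0 < r"
    using assms(5) by (simp add: r_def)
  have "\<bar>\<integral>h. sym_frac_integrand s (bracket_powr \<beta>) r h \<partial>lborel\<bar>
      \<le> r * r powr (-\<beta> - (1 + 2 * s)) * (\<integral>t. decay_profile s \<beta> t \<partial>lborel)"
  proof (rule abs_integral_le_by_scaling[OF \<open>0 < r\<close> integrable_sym_frac_integrand])
    show "integrable lborel (decay_profile s \<beta>)"
      using assms by (intro integrable_decay_profile)
    show "AE t in lborel. \<bar>sym_frac_integrand s (bracket_powr \<beta>) r (r * t)\<bar>
        \<le> r powr (-\<beta> - (1 + 2 * s)) * decay_profile s \<beta> t"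
      using AE_lborel_singleton[of 1] AE_lborel_singleton[of "-1"]
      by eventually_elim
        (use assms \<open>0 < r\<close> in \<open>auto intro: abs_sym_frac_integrand_bracket_powr_scaled\<close>)
  qed
  also have "r * r powr (-\<beta> - (1 + 2 * s)) = r powr (-\<beta> - 2 * s)"
    using \<open>0 < r\<close> by (simp add: powr_diff powr_minus divide_inverse powr_add)
  finally show ?thesis
    using sym_frac_integrand_abs[of "bracket_powr \<beta>" s x]
    by (simp add: frac_lap_eq r_def abs_mult mult_left_mono divide_right_mono mult_ac)
qed

lemma frac_lap_bracket_powr_decay:
  assumes "0 < s" "s < 1" "0 \<le> \<beta>" "\<beta> < 1"
  shows "\<exists>C>0. \<forall>x. x \<noteq> 0 \<longrightarrow> \<bar>frac_lap s (bracket_powr \<beta>) x\<bar> \<le> C * \<bar>x\<bar> powr (-\<beta> - 2 * s)"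
proof (intro exI conjI allI impI)
  define C where "C = \<bar>frac_const s\<bar> * (\<integral>t. decay_profile s \<beta> t \<partial>lborel) / 2"
  have "0 \<le> C"
    unfolding C_def using decay_profile_nonneg by (simp add: integral_nonneg)
  then show "0 < C + 1"
    by simp
  show "\<bar>frac_lap s (bracket_powr \<beta>) x\<bar> \<le> (C + 1) * \<bar>x\<bar> powr (-\<beta> - 2 * s)" if "x \<noteq> 0" for x
    using abs_frac_lap_bracket_powr_le[OF assms that]
    by (simp add: C_def distrib_right add_increasing2)
qed

theorem proposition4p1:
  fixes p s \<beta> :: real and u :: "real \<Rightarrow> real"
  assumes "1 \<le> p" and "0 < s" and "s < 1"
    and "max 0 (1/p - 2 * s) < \<beta>" and "\<beta> < 1/p"
    and "u = (\<lambda>x. (1 + x\<^sup>2) powr (-\<beta>/2))"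
  shows "\<not> in_Lp p u
    \<and> (\<forall>x. \<forall>\<epsilon>>0. set_integrable lborel {y. \<epsilon> \<le> \<bar>x - y\<bar>}
            (\<lambda>y. (u x - u y) / \<bar>x - y\<bar> powr (1 + 2 * s)))
    \<and> (\<forall>x. \<exists>L. (frac_trunc s u x \<longlongrightarrow> L) (at_right 0))
    \<and> (\<exists>C>0. \<forall>x. 1 \<le> \<bar>x\<bar> \<longrightarrow> \<bar>frac_lap s u x\<bar> \<le> C * \<bar>x\<bar> powr (-\<beta> - 2 * s))
    \<and> in_Lp p (frac_lap s u)"
proof -
  have "0 < p" "0 < \<beta>"
    using assms(1,4) by auto
  have "\<beta> * p < 1" "1 < (\<beta> + 2 * s) * p"
    using assms(4,5) \<open>0 < p\<close> by (auto simp: field_simps)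
  have "\<beta> < 1"
    using assms(1,5) by (smt (verit) divide_le_eq_1)
  have u: "u = bracket_powr \<beta>"
    by (simp add: assms(6) bracket_powr_def fun_eq_iff)
  interpret frac_regular s "bracket_powr \<beta>" 1 6
    using assms(2,3) \<open>0 < \<beta>\<close> \<open>\<beta> < 1\<close> by (intro frac_regular_bracket_powr) auto
  obtain C where "0 < C"
    and decay: "\<forall>x. x \<noteq> 0 \<longrightarrow> \<bar>frac_lap s (bracket_powr \<beta>) x\<bar> \<le> C * \<bar>x\<bar> powr (-\<beta> - 2 * s)"
    using frac_lap_bracket_powr_decay[OF assms(2,3) _ \<open>\<beta> < 1\<close>] \<open>0 < \<beta>\<close> by auto
  have "in_Lp p (frac_lap s (bracket_powr \<beta>))"
  proof (rule in_Lp_if_bounded_decay[OF measurable_frac_lap abs_frac_lap_le])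
    show "\<bar>frac_lap s (bracket_powr \<beta>) x\<bar> \<le> C * \<bar>x\<bar> powr (-(\<beta> + 2 * s))" if "1 \<le> \<bar>x\<bar>" for x
      using decay that by auto
  qed fact+
  moreover have "\<not> in_Lp p (bracket_powr \<beta>)"
    using \<open>0 < p\<close> \<open>0 < \<beta>\<close> \<open>\<beta> * p < 1\<close> by (intro not_in_Lp_bracket_powr) auto
  ultimately show ?thesis
    unfolding u using set_integrable_frac_trunc frac_trunc_tendsto \<open>0 < C\<close> decay by auto
qed

end
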